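(* Let $\{\mathbf{k}^{(N)}\}_{N\ge1}$ be a sequence with $\mathbf{k}^{(N)}=(k_1^{(N)},\dots,k_N^{(N)})\in\Delta_N$, and let $\mathbf{k}\in\Delta_0$ be such that $\lim_{N\to\infty,N\ge j}k_j^{(N)}=k_j$ for every $j\ge1$. Then for every $i\ge1$, $l_i(\mathbf{k}^{(N)})\to l_i(\mathbf{k})$ and $\sum_{j=i}^\infty l_j(\mathbf{k}^{(N)})\to\sum_{j=i}^\infty l_j(\mathbf{k})$ as $N\to\infty$.
   Context: $\Delta_N=\{(k_1,\dots,k_N)\in(\mathbb{Z}\cup\{-\infty\})^N:k_1\ge\dots\ge k_N\}$; $\Delta_0=\{\mathbf{k}=(k_j)_{j\ge1}\in\mathbb{Z}_+^{\mathbb{N}}:k_1\ge k_2\ge\cdots,\ k_i=0\text{ for all large }i\}$, where $\mathbb{Z}_+=\{0,1,2,\dots\}$. For a finite or infinite sequence $\mathbf{k}$ and $i\in\mathbb{Z}\cup\{-\infty\}$, $l_i(\mathbf{k})=\#\{j:k_j=i\}$. *)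

theory Defs
  imports "HOL-Analysis.Analysis"
begin

text \<open>Elements of Z \<union> {-\<infinity>} are represented as extended reals that are either
  -\<infinity> or (the image of) an integer. A finite sequence (k_1,...,k_N) is a function
  on indices 1..N (values at other indices are irrelevant).\<close>

definition is_int_or_minf :: "ereal \<Rightarrow> bool" where
  "is_int_or_minf x \<longleftrightarrow> x = -\<infinity> \<or> (\<exists>z::int. x = ereal (of_int z))"

definition in_DeltaN :: "nat \<Rightarrow> (nat \<Rightarrow> ereal) \<Rightarrow> bool" where
  "in_DeltaN N k \<longleftrightarrow> (\<forall>j\<in>{1..N}. is_int_or_minf (k j)) \<and>
     (\<forall>j1 j2. 1 \<le> j1 \<and> j1 \<le> j2 \<and> j2 \<le> N \<longrightarrow> k j2 \<le> k j1)"

definition in_Delta0 :: "(nat \<Rightarrow> int) \<Rightarrow> bool" where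
  "in_Delta0 k \<longleftrightarrow> (\<forall>j\<ge>1. 0 \<le> k j) \<and>
     (\<forall>j1 j2. 1 \<le> j1 \<and> j1 \<le> j2 \<longrightarrow> k j2 \<le> k j1) \<and>
     (\<exists>M. \<forall>j\<ge>M. k j = 0)"

definition mult_N :: "nat \<Rightarrow> (nat \<Rightarrow> ereal) \<Rightarrow> int \<Rightarrow> nat" where
  "mult_N N k i = card {j\<in>{1..N}. k j = ereal (of_int i)}"

definition mult_0 :: "(nat \<Rightarrow> int) \<Rightarrow> int \<Rightarrow> nat" where
  "mult_0 k i = card {j. 1 \<le> j \<and> k j = i}"

end

theory Submission
  imports Defs
begin

text \<open>Since \<open>k\<close> vanishes from some index \<open>M\<close> on, only the finitely many coordinates
  \<open>1..M\<close> matter. Each of them takes values in \<open>\<int> \<union> {-\<infinity>}\<close> and converges to an integer,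
  hence is eventually equal to its limit. Once the first \<open>M\<close> coordinates of the \<open>N\<close>-th
  sequence agree with those of \<open>k\<close>, monotonicity forces all later coordinates to be \<open>\<le> 0\<close>, so every
  positive value occurs in it exactly as often as in \<open>k\<close>. Both sequences of the
  theorem are therefore eventually constant.\<close>

lemma eventually_eq_int_limit:
  fixes f :: "nat \<Rightarrow> ereal" and c :: int
  assumes lim: "f \<longlonglongrightarrow> ereal (of_int c)"
    and int: "eventually (\<lambda>N. is_int_or_minf (f N)) sequentially"
  shows "eventually (\<lambda>N. f N = ereal (of_int c)) sequentially"
proof -
  let ?U = "{ereal (of_int c - 1/2)<..<ereal (of_int c + 1/2)}"
  have "eventually (\<lambda>N. f N \<in> ?U) sequentially"
    by (rule topological_tendstoD[OF lim]) auto
  with int show ?thesis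
  proof eventually_elim
    case (elim N)
    then obtain z :: int where z: "f N = ereal (of_int z)"
      unfolding is_int_or_minf_def by auto
    with elim(2) have "of_int c - 1/2 < (of_int z :: real)" "(of_int z :: real) < of_int c + 1/2"
      by auto
    then have "z = c" by linarith
    with z show ?case by simp
  qed
qed

lemma mult_N_eq_mult_0:
  fixes kN :: "nat \<Rightarrow> ereal" and k :: "nat \<Rightarrow> int"
  assumes "in_DeltaN N kN" and "1 \<le> M" and "M \<le> N"
    and agree: "\<forall>j\<in>{1..M}. kN j = ereal (of_int (k j))"
    and zero: "\<forall>j\<ge>M. k j = 0"
    and "i \<ge> 1"
  shows "mult_N N kN i = mult_0 k i"
proof -
  have tail: "kN j \<le> 0" if "M \<le> j" "j \<le> N" for j
  proof -
    have "kN j \<le> kN M"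
      using \<open>in_DeltaN N kN\<close> \<open>1 \<le> M\<close> that unfolding in_DeltaN_def by blast
    also have "kN M = 0"
      using agree zero \<open>1 \<le> M\<close> by (simp add: zero_ereal_def)
    finally show ?thesis .
  qed
  have "{j\<in>{1..N}. kN j = ereal (of_int i)} = {j. 1 \<le> j \<and> k j = i}"
  proof (intro set_eqI iffI)
    fix j assume "j \<in> {j\<in>{1..N}. kN j = ereal (of_int i)}"
    then have j: "1 \<le> j" "j \<le> N" "kN j = ereal (of_int i)" by auto
    have "j < M"
    proof (rule ccontr)
      assume "\<not> j < M"
      with j tail[of j] have "ereal (of_int i) \<le> 0" by simp
      with \<open>i \<ge> 1\<close> show False by simp
    qed
    with j agree have "ereal (of_int (k j)) = ereal (of_int i)" by simp
    with j show "j \<in> {j. 1 \<le> j \<and> k j = i}" by simp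
  next
    fix j assume "j \<in> {j. 1 \<le> j \<and> k j = i}"
    then have j: "1 \<le> j" "k j = i" by auto
    have "j < M"
    proof (rule ccontr)
      assume "\<not> j < M"
      with zero j \<open>i \<ge> 1\<close> show False by simp
    qed
    with j agree \<open>M \<le> N\<close> show "j \<in> {j\<in>{1..N}. kN j = ereal (of_int i)}" by simp
  qed
  then show ?thesis unfolding mult_N_def mult_0_def by simp
qed

lemma eventually_mult_N_eq_mult_0:
  fixes kN :: "nat \<Rightarrow> nat \<Rightarrow> ereal" and k :: "nat \<Rightarrow> int"
  assumes delta: "\<And>N. N \<ge> 1 \<Longrightarrow> in_DeltaN N (kN N)"
    and "in_Delta0 k"
    and lim: "\<And>j. j \<ge> 1 \<Longrightarrow> (\<lambda>N. kN N j) \<longlonglongrightarrow> ereal (of_int (k j))"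
  shows "eventually (\<lambda>N. \<forall>i\<ge>1. mult_N N (kN N) i = mult_0 k i) sequentially"
proof -
  obtain M where zero: "\<forall>j\<ge>M. k j = 0" and "1 \<le> M"
    using \<open>in_Delta0 k\<close> unfolding in_Delta0_def by (metis max.cobounded1 max.cobounded2 order_trans)
  have "\<forall>j\<in>{1..M}. eventually (\<lambda>N. kN N j = ereal (of_int (k j))) sequentially"
  proof
    fix j assume "j \<in> {1..M}"
    have "eventually (\<lambda>N. is_int_or_minf (kN N j)) sequentially"
      using eventually_ge_at_top[of j]
      by eventually_elim (use delta \<open>j \<in> {1..M}\<close> in \<open>auto simp: in_DeltaN_def\<close>)
    with lim \<open>j \<in> {1..M}\<close> show "eventually (\<lambda>N. kN N j = ereal (of_int (k j))) sequentially"
      by (auto intro: eventually_eq_int_limit)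
  qed
  then have "eventually (\<lambda>N. \<forall>j\<in>{1..M}. kN N j = ereal (of_int (k j))) sequentially"
    by (simp add: eventually_ball_finite)
  with eventually_ge_at_top[of M] show ?thesis
  proof eventually_elim
    case (elim N)
    with \<open>1 \<le> M\<close> have "in_DeltaN N (kN N)" by (intro delta) simp
    with elim zero \<open>1 \<le> M\<close> show ?case by (blast intro: mult_N_eq_mult_0)
  qed
qed

theorem lemma3p10:
  fixes kN :: "nat \<Rightarrow> nat \<Rightarrow> ereal" and k :: "nat \<Rightarrow> int"
  assumes "\<And>N. N \<ge> 1 \<Longrightarrow> in_DeltaN N (kN N)"
    and "in_Delta0 k"
    and "\<And>j. j \<ge> 1 \<Longrightarrow> (\<lambda>N. kN N j) \<longlonglongrightarrow> ereal (of_int (k j))"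
  shows "\<forall>i::int. i \<ge> 1 \<longrightarrow>
           (\<lambda>N. real (mult_N N (kN N) i)) \<longlonglongrightarrow> real (mult_0 k i) \<and>
           (\<lambda>N. \<Sum>n. real (mult_N N (kN N) (i + int n)))
              \<longlonglongrightarrow> (\<Sum>n. real (mult_0 k (i + int n)))"
proof (intro allI impI conjI)
  fix i :: int assume "i \<ge> 1"
  have agree: "eventually (\<lambda>N. \<forall>i\<ge>1. mult_N N (kN N) i = mult_0 k i) sequentially"
    using eventually_mult_N_eq_mult_0[OF assms] .
  show "(\<lambda>N. real (mult_N N (kN N) i)) \<longlonglongrightarrow> real (mult_0 k i)"
    by (rule tendsto_eventually) (use agree in eventually_elim, use \<open>i \<ge> 1\<close> in auto)
  show "(\<lambda>N. \<Sum>n. real (mult_N N (kN N) (i + int n))) \<longlonglongrightarrow> (\<Sum>n. real (mult_0 k (i + int n)))"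
    by (rule tendsto_eventually) (use agree in eventually_elim, use \<open>i \<ge> 1\<close> in auto)
qed

end
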